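(* Let $m\ge n$, $c_1,\dots,c_m>0$, positive integers $n_i\le n$ with $\sum_i c_in_i=n$, and surjective linear maps $B_i:\mathbb{R}^n\to\mathbb{R}^{n_i}$ with $\bigcap_i\ker B_i=\{0\}$. With $I$, $J$ as defined in the context, set $$E_g=\inf\Big\{\frac{I((g_i)_{i=1}^m)}{\prod_{i=1}^m(\int_{\mathbb{R}^{n_i}} g_i)^{c_i}}\Big\},\qquad F_g=\sup\Big\{\frac{J((g_i)_{i=1}^m)}{\prod_{i=1}^m(\int_{\mathbb{R}^{n_i}} g_i)^{c_i}}\Big\},$$ the infimum and supremum taken over all $m$-tuples with each $g_i$ a centered Gaussian function on $\mathbb{R}^{n_i}$. Then $E_g\cdot F_g=1$, and $E_g=0$ if and only if $F_g=+\infty$.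
   Context: For non-negative integrable $f_i$ on $\mathbb{R}^{n_i}$: $I((f_i)_{i=1}^m)=\int^*_{\mathbb{R}^n}\sup\{\prod_i f_i^{c_i}(y_i);\ \sum_i c_iB_i^*y_i=x,\ y_i\in\mathbb{R}^{n_i}\}\,dx$ (outer integral) and $J((f_i)_{i=1}^m)=\int_{\mathbb{R}^n}\prod_i f_i^{c_i}(B_ix)\,dx$. $B_i^*$ is the Euclidean adjoint. A centered Gaussian function on $\mathbb{R}^k$ is $x\mapsto\exp(-\langle Ax,x\rangle)$ with $A$ a symmetric positive definite $k\times k$ matrix. *)

theory Defs
  imports "HOL-Analysis.Analysis"
begin

text \<open>R^k is modelled as the extensional functions {..<k} -> real (PiE) with
  Lebesgue (product Borel) measure.\<close>
definition RR :: "nat \<Rightarrow> (nat \<Rightarrow> real) measure" where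
  "RR k = PiM {..<k} (\<lambda>_. lborel)"

definition matvec :: "nat \<Rightarrow> nat \<Rightarrow> (nat \<Rightarrow> nat \<Rightarrow> real) \<Rightarrow> (nat \<Rightarrow> real) \<Rightarrow> (nat \<Rightarrow> real)" where
  "matvec p q M x = (\<lambda>j\<in>{..<p}. \<Sum>l<q. M j l * x l)"

definition transp :: "(nat \<Rightarrow> nat \<Rightarrow> real) \<Rightarrow> (nat \<Rightarrow> nat \<Rightarrow> real)" where
  "transp M = (\<lambda>l j. M j l)"

text \<open>Outer integral of a non-negative (possibly non-measurable) function.\<close>
definition outer_nn_integral :: "'a measure \<Rightarrow> ('a \<Rightarrow> ennreal) \<Rightarrow> ennreal" where
  "outer_nn_integral M f =
     (INF h \<in> {h \<in> borel_measurable M. \<forall>x\<in>space M. f x \<le> h x}. nn_integral M h)"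

definition I_fun :: "nat \<Rightarrow> nat \<Rightarrow> (nat \<Rightarrow> nat) \<Rightarrow> (nat \<Rightarrow> real)
    \<Rightarrow> (nat \<Rightarrow> nat \<Rightarrow> nat \<Rightarrow> real) \<Rightarrow> (nat \<Rightarrow> (nat \<Rightarrow> real) \<Rightarrow> real) \<Rightarrow> ennreal" where
  "I_fun m n ni c B f = outer_nn_integral (RR n)
     (\<lambda>x. SUP y \<in> {y. (\<forall>i<m. y i \<in> space (RR (ni i))) \<and>
                     (\<forall>l<n. (\<Sum>i<m. c i * matvec n (ni i) (transp (B i)) (y i) l) = x l)}.
            ennreal (\<Prod>i<m. f i (y i) powr c i))"

definition J_fun :: "nat \<Rightarrow> nat \<Rightarrow> (nat \<Rightarrow> nat) \<Rightarrow> (nat \<Rightarrow> real)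
    \<Rightarrow> (nat \<Rightarrow> nat \<Rightarrow> nat \<Rightarrow> real) \<Rightarrow> (nat \<Rightarrow> (nat \<Rightarrow> real) \<Rightarrow> real) \<Rightarrow> ennreal" where
  "J_fun m n ni c B f =
     (\<integral>\<^sup>+ x. ennreal (\<Prod>i<m. f i (matvec (ni i) n (B i) x) powr c i) \<partial>RR n)"

definition centered_gaussian :: "nat \<Rightarrow> ((nat \<Rightarrow> real) \<Rightarrow> real) \<Rightarrow> bool" where
  "centered_gaussian k g \<longleftrightarrow> (\<exists>A :: nat \<Rightarrow> nat \<Rightarrow> real.
     (\<forall>j<k. \<forall>l<k. A j l = A l j) \<and>
     (\<forall>x\<in>space (RR k). (\<exists>j<k. x j \<noteq> 0) \<longrightarrow> (\<Sum>j<k. \<Sum>l<k. A j l * x j * x l) > 0) \<and>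
     (\<forall>x\<in>space (RR k). g x = exp (- (\<Sum>j<k. \<Sum>l<k. A j l * x j * x l))))"

definition gauss_tuples :: "nat \<Rightarrow> (nat \<Rightarrow> nat) \<Rightarrow> (nat \<Rightarrow> (nat \<Rightarrow> real) \<Rightarrow> real) set" where
  "gauss_tuples m ni = {g. \<forall>i<m. centered_gaussian (ni i) (g i)}"

definition denom :: "nat \<Rightarrow> (nat \<Rightarrow> nat) \<Rightarrow> (nat \<Rightarrow> real) \<Rightarrow> (nat \<Rightarrow> (nat \<Rightarrow> real) \<Rightarrow> real) \<Rightarrow> real" where
  "denom m ni c g = (\<Prod>i<m. (integral\<^sup>L (RR (ni i)) (g i)) powr c i)"

definition E_g where
  "E_g m n ni c B = (INF g \<in> gauss_tuples m ni. I_fun m n ni c B g / ennreal (denom m ni c g))"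

definition F_g where
  "F_g m n ni c B = (SUP g \<in> gauss_tuples m ni. J_fun m n ni c B g / ennreal (denom m ni c g))"

end

theory Submission
  imports Defs "HOL-Probability.Distributions" "Jordan_Normal_Form.Determinant"
begin

text \<open>For centered Gaussians \<open>g\<^sub>i(y) = exp(-\<langle>A\<^sub>i y, y\<rangle>)\<close> both \<open>I\<close> and \<open>J\<close> are Gaussian
  integrals over \<open>\<real>\<^sup>n\<close>. Put \<open>C\<^sub>i = A\<^sub>i\<inverse>\<close> and \<open>N = \<Sum>\<^sub>i c\<^sub>i B\<^sub>i\<^sup>* C\<^sub>i B\<^sub>i\<close>, which is positive
  definite because the kernels of the \<open>B\<^sub>i\<close> meet only in \<open>0\<close>. Completing the square
  (Young's inequality \<open>2\<langle>y,w\<rangle> - \<langle>C w,w\<rangle> \<le> \<langle>A y,y\<rangle>\<close>, with equality at \<open>y = C w\<close>) shows that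
  the supremum inside \<open>I\<close> at \<open>x\<close> is \<open>exp(-\<langle>N\<inverse>x,x\<rangle>)\<close>, while the integrand of \<open>J\<close> for
  the dual tuple \<open>exp(-\<langle>C\<^sub>i y,y\<rangle>)\<close> is \<open>exp(-\<langle>N x,x\<rangle>)\<close>. As
  \<open>\<integral> exp(-\<langle>M x,x\<rangle>) dx = \<pi>\<^bsup>k/2\<^esup> det(M)\<^bsup>-1/2\<^esup>\<close>, the \<open>I\<close>-ratio of \<open>(A\<^sub>i)\<close> times the
  \<open>J\<close>-ratio of \<open>(C\<^sub>i)\<close> is \<open>\<pi>\<^sup>n / \<pi>\<^bsup>\<Sum> c\<^sub>i n\<^sub>i\<^esup> = 1\<close>. Since \<open>A \<mapsto> A\<inverse>\<close> is a bijection
  of positive definite matrices, \<open>E\<^sub>g = 1 / F\<^sub>g\<close>.\<close>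

lemma nn_integral_exp_quadratic:
  fixes a b q :: real
  assumes a: "a > 0"
  shows "(\<integral>\<^sup>+y. ennreal (exp (-(a*y\<^sup>2 + 2*b*y + q))) \<partial>lborel)
       = ennreal (sqrt (pi/a) * exp (b\<^sup>2/a - q))"
proof -
  define s where "s = 1 / sqrt (2*a)"
  have s: "s > 0" using a by (simp add: s_def)
  have s2: "2 * s\<^sup>2 = 1/a" using a by (simp add: s_def power_divide)
  have density: "exp (-(a*y\<^sup>2 + 2*b*y + q))
      = sqrt (pi/a) * exp (b\<^sup>2/a - q) * normal_density (-b/a) s y" for y
  proof -
    have "2 * pi * s\<^sup>2 = pi / a" using s2 by (metis mult.assoc mult.commute times_divide_eq_right mult_1_right)
    moreover have "(y - -b / a)\<^sup>2 / (2 * s\<^sup>2) = a * (y + b / a)\<^sup>2" using s2 a by simp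
    ultimately have "normal_density (-b/a) s y = exp (-(a*(y + b/a)\<^sup>2)) / sqrt (pi/a)"
      unfolding normal_density_def by simp
    moreover have "exp (-(a*y\<^sup>2 + 2*b*y + q)) = exp (-(a*(y + b/a)\<^sup>2)) * exp (b\<^sup>2/a - q)"
      unfolding exp_add[symmetric] using a by (simp add: power2_eq_square field_simps)
    ultimately show ?thesis using a by simp
  qed
  have "(\<integral>\<^sup>+y. ennreal (exp (-(a*y\<^sup>2 + 2*b*y + q))) \<partial>lborel)
     = (\<integral>\<^sup>+y. ennreal (sqrt (pi/a) * exp (b\<^sup>2/a - q)) * ennreal (normal_density (-b/a) s y) \<partial>lborel)"
    unfolding density using a by (intro nn_integral_cong ennreal_mult) auto
  also have "\<dots> = ennreal (sqrt (pi/a) * exp (b\<^sup>2/a - q)) * (\<integral>\<^sup>+y. ennreal (normal_density (-b/a) s y) \<partial>lborel)"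
    by (rule nn_integral_cmult) simp
  also have "(\<integral>\<^sup>+y. ennreal (normal_density (-b/a) s y) \<partial>lborel) = 1"
    using s by (subst nn_integral_eq_integral[OF integrable_normal_density]) simp_all
  finally show ?thesis by simp
qed

lemma ennreal_inverse_inverse: "inverse (inverse (x::ennreal)) = x"
proof (cases x rule: ennreal_cases)
  case (real r)
  then show ?thesis by (cases "r = 0") (simp_all add: inverse_ennreal)
qed simp

lemma ennreal_inverse_antimono:
  assumes "(x::ennreal) \<le> y"
  shows "inverse y \<le> inverse x"
proof (cases x rule: ennreal_cases)
  case (real r)
  show ?thesis
  proof (cases y rule: ennreal_cases)
    case (real s)
    with \<open>x = ennreal r\<close> \<open>0 \<le> r\<close> assms show ?thesis
      by (cases "r = 0") (auto simp: inverse_ennreal le_imp_inverse_le)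
  qed simp
qed (use assms in \<open>simp add: top_unique\<close>)

lemma INF_eq_inverse_SUP_ennreal:
  fixes f g :: "'a \<Rightarrow> ennreal"
  assumes f: "\<And>x. x \<in> T \<Longrightarrow> \<exists>y\<in>T. \<exists>r>0. f x = ennreal r \<and> g y = ennreal (1 / r)"
    and g: "\<And>y. y \<in> T \<Longrightarrow> \<exists>x\<in>T. \<exists>r>0. f x = ennreal r \<and> g y = ennreal (1 / r)"
  shows "(INF x\<in>T. f x) = inverse (SUP y\<in>T. g y)"
proof (rule antisym)
  have "g y \<le> inverse (INF x\<in>T. f x)" if y: "y \<in> T" for y
  proof -
    obtain x r where "x \<in> T" "r > 0" "f x = ennreal r" "g y = ennreal (1 / r)"
      using g[OF y] by blast
    moreover from \<open>x \<in> T\<close> have "inverse (f x) \<le> inverse (INF x\<in>T. f x)"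
      by (intro ennreal_inverse_antimono INF_lower)
    ultimately show ?thesis by (simp add: inverse_ennreal inverse_eq_divide)
  qed
  then have "inverse (inverse (INF x\<in>T. f x)) \<le> inverse (SUP y\<in>T. g y)"
    by (intro ennreal_inverse_antimono SUP_least)
  then show "(INF x\<in>T. f x) \<le> inverse (SUP y\<in>T. g y)"
    by (simp add: ennreal_inverse_inverse)
  show "inverse (SUP y\<in>T. g y) \<le> (INF x\<in>T. f x)"
  proof (rule INF_greatest)
    fix x assume "x \<in> T"
    then obtain y r where "y \<in> T" "r > 0" "f x = ennreal r" "g y = ennreal (1 / r)"
      using f by blast
    moreover from \<open>y \<in> T\<close> have "inverse (SUP y\<in>T. g y) \<le> inverse (g y)"
      by (intro ennreal_inverse_antimono SUP_upper)
    ultimately show "inverse (SUP y\<in>T. g y) \<le> f x" by (simp add: inverse_ennreal)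
  qed
qed

section \<open>Quadratic forms\<close>

definition dot :: "nat \<Rightarrow> (nat \<Rightarrow> real) \<Rightarrow> (nat \<Rightarrow> real) \<Rightarrow> real" where
  "dot k u v = (\<Sum>j<k. u j * v j)"

definition mvec :: "nat \<Rightarrow> (nat \<Rightarrow> nat \<Rightarrow> real) \<Rightarrow> (nat \<Rightarrow> real) \<Rightarrow> nat \<Rightarrow> real" where
  "mvec k A x = (\<lambda>j. \<Sum>l<k. A j l * x l)"

definition quad_form :: "nat \<Rightarrow> (nat \<Rightarrow> nat \<Rightarrow> real) \<Rightarrow> (nat \<Rightarrow> real) \<Rightarrow> real" where
  "quad_form k A x = (\<Sum>j<k. \<Sum>l<k. A j l * x j * x l)"

definition symmetric_mat :: "nat \<Rightarrow> (nat \<Rightarrow> nat \<Rightarrow> real) \<Rightarrow> bool" where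
  "symmetric_mat k A \<longleftrightarrow> (\<forall>j<k. \<forall>l<k. A j l = A l j)"

definition pos_def :: "nat \<Rightarrow> (nat \<Rightarrow> nat \<Rightarrow> real) \<Rightarrow> bool" where
  "pos_def k A \<longleftrightarrow> symmetric_mat k A \<and> (\<forall>x. (\<exists>j<k. x j \<noteq> 0) \<longrightarrow> quad_form k A x > 0)"

lemma dot_commute: "dot k u v = dot k v u"
  unfolding dot_def by (simp add: mult.commute)

lemma mvec_cong: "(\<And>l. l < k \<Longrightarrow> x l = y l) \<Longrightarrow> mvec k A x = mvec k A y"
  unfolding mvec_def by (auto intro!: sum.cong)

lemma quad_form_cong: "(\<And>j. j < k \<Longrightarrow> x j = y j) \<Longrightarrow> quad_form k A x = quad_form k A y"
  unfolding quad_form_def by (intro sum.cong refl) auto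

lemma matvec_eq_mvec: "j < p \<Longrightarrow> matvec p q M x j = mvec q M x j"
  unfolding matvec_def mvec_def by simp

lemma quad_form_dot: "quad_form k A x = dot k x (mvec k A x)"
  unfolding quad_form_def dot_def mvec_def by (simp add: sum_distrib_left mult_ac)

lemma dot_mvec_transp: "dot p v (mvec n B x) = dot n (mvec p (transp B) v) x"
proof -
  have "dot p v (mvec n B x) = (\<Sum>j<p. \<Sum>l<n. B j l * v j * x l)"
    unfolding dot_def mvec_def by (simp add: sum_distrib_left mult_ac)
  also have "\<dots> = (\<Sum>l<n. \<Sum>j<p. B j l * v j * x l)" by (rule sum.swap)
  also have "\<dots> = dot n (mvec p (transp B) v) x"
    unfolding dot_def mvec_def transp_def by (simp add: sum_distrib_right)
  finally show ?thesis .
qed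

lemma quad_form_nonneg:
  assumes "pos_def k A" shows "0 \<le> quad_form k A x"
proof (cases "\<exists>j<k. x j \<noteq> 0")
  case True then show ?thesis using assms unfolding pos_def_def by (auto intro: less_imp_le)
next
  case False
  then have "quad_form k A x = quad_form k A (\<lambda>_. 0)" by (intro quad_form_cong) auto
  then show ?thesis by (simp add: quad_form_def)
qed

lemma quad_form_eq_0: "pos_def k A \<Longrightarrow> quad_form k A x = 0 \<Longrightarrow> j < k \<Longrightarrow> x j = 0"
  unfolding pos_def_def by force

lemma pos_def_one: "pos_def k (\<lambda>j l. if j = l then 1 else 0)"
  unfolding pos_def_def symmetric_mat_def
proof (intro conjI allI impI)
  fix x :: "nat \<Rightarrow> real" assume "\<exists>j<k. x j \<noteq> 0"
  then obtain j where "j < k" "x j \<noteq> 0" by auto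
  have "quad_form k (\<lambda>j l. if j = l then 1 else 0) x = (\<Sum>j<k. (x j)\<^sup>2)"
    unfolding quad_form_def by (simp add: power2_eq_square if_distrib if_distribR cong: if_cong)
  also have "\<dots> > 0"
    using \<open>j < k\<close> \<open>x j \<noteq> 0\<close> by (intro sum_pos2[of _ j]) auto
  finally show "quad_form k (\<lambda>j l. if j = l then 1 else 0) x > 0" .
qed auto

lemma quad_form_diff:
  assumes "symmetric_mat k A"
  shows "quad_form k A (\<lambda>j. u j - v j) = quad_form k A u - 2 * dot k u (mvec k A v) + quad_form k A v"
proof -
  have cross: "(\<Sum>j<k. \<Sum>l<k. A j l * v j * u l) = dot k u (mvec k A v)"
    unfolding dot_def mvec_def sum_distrib_left
    by (subst sum.swap) (use assms in \<open>auto simp: symmetric_mat_def mult_ac intro!: sum.cong\<close>)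
  have "quad_form k A (\<lambda>j. u j - v j)
      = (\<Sum>j<k. \<Sum>l<k. A j l * u j * u l - A j l * u j * v l - A j l * v j * u l + A j l * v j * v l)"
    unfolding quad_form_def by (intro sum.cong refl) (simp add: algebra_simps)
  also have "\<dots> = quad_form k A u - (\<Sum>j<k. \<Sum>l<k. A j l * u j * v l) - (\<Sum>j<k. \<Sum>l<k. A j l * v j * u l) + quad_form k A v"
    unfolding quad_form_def by (simp add: sum.distrib sum_subtractf)
  also have "(\<Sum>j<k. \<Sum>l<k. A j l * u j * v l) = dot k u (mvec k A v)"
    unfolding dot_def mvec_def by (simp add: sum_distrib_left mult_ac)
  finally show ?thesis unfolding cross by simp
qed

lemma mvec_sum: "mvec n (\<lambda>l l'. \<Sum>i<m. c i * F i l l') x = (\<lambda>l. \<Sum>i<m. c i * mvec n (F i) x l)"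
  unfolding mvec_def by (simp add: sum_distrib_left sum_distrib_right mult_ac sum.swap[of _ "{..<n}"])

lemma quad_form_sum: "quad_form n (\<lambda>l l'. \<Sum>i<m. c i * F i l l') x = (\<Sum>i<m. c i * quad_form n (F i) x)"
  unfolding quad_form_dot mvec_sum dot_def
  by (simp add: sum_distrib_left mult_ac sum.swap[of _ "{..<n}"])

lemma symmetric_mat_sum:
  "(\<And>i. i < m \<Longrightarrow> symmetric_mat n (F i)) \<Longrightarrow> symmetric_mat n (\<lambda>l l'. \<Sum>i<m. c i * F i l l')"
  unfolding symmetric_mat_def by (auto intro!: sum.cong)

section \<open>Schur complements and determinants\<close>

definition schur_compl :: "(nat \<Rightarrow> nat \<Rightarrow> real) \<Rightarrow> nat \<Rightarrow> nat \<Rightarrow> nat \<Rightarrow> real" where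
  "schur_compl A k = (\<lambda>i j. A i j - A i k * A k j / A k k)"

lemma quad_form_upd:
  assumes sym: "symmetric_mat (Suc k) A"
  shows "quad_form (Suc k) A (x(k:=y)) = quad_form k A x + 2*y*(\<Sum>j<k. A k j * x j) + A k k * y\<^sup>2"
proof -
  have col: "(\<Sum>j<k. A j k * x j * y) = (\<Sum>j<k. A k j * x j * y)"
    using sym unfolding symmetric_mat_def by (intro sum.cong refl) auto
  have "quad_form (Suc k) A (x(k:=y))
      = (\<Sum>j<k. (\<Sum>l<k. A j l * x j * x l) + A j k * x j * y) + ((\<Sum>l<k. A k l * y * x l) + A k k * y * y)"
    unfolding quad_form_def by simp
  also have "\<dots> = quad_form k A x + (\<Sum>j<k. A k j * x j * y) + (\<Sum>l<k. A k l * x l * y) + A k k * y * y"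
    unfolding quad_form_def sum.distrib col by (simp add: mult_ac)
  also have "\<dots> = quad_form k A x + 2*y*(\<Sum>j<k. A k j * x j) + A k k * y\<^sup>2"
    by (simp add: sum_distrib_left sum_distrib_right mult_ac power2_eq_square)
  finally show ?thesis .
qed

lemma quad_form_schur_compl:
  assumes sym: "symmetric_mat (Suc k) A"
  shows "quad_form k (schur_compl A k) x = quad_form k A x - (\<Sum>j<k. A k j * x j)\<^sup>2 / A k k"
proof -
  have "quad_form k (schur_compl A k) x = quad_form k A x - (\<Sum>j<k. \<Sum>l<k. A j k * A k l / A k k * x j * x l)"
    unfolding quad_form_def schur_compl_def by (simp add: left_diff_distrib sum_subtractf)
  also have "(\<Sum>j<k. \<Sum>l<k. A j k * A k l / A k k * x j * x l) = (\<Sum>j<k. \<Sum>l<k. (A k j * x j) * (A k l * x l)) / A k k"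
    unfolding sum_divide_distrib
    using sym unfolding symmetric_mat_def by (intro sum.cong refl) (auto simp: field_simps)
  also have "\<dots> = (\<Sum>j<k. A k j * x j)\<^sup>2 / A k k"
    by (simp add: power2_eq_square sum_product)
  finally show ?thesis .
qed

lemma pos_def_schur_compl:
  assumes "pos_def (Suc k) A"
  shows "A k k > 0" and "pos_def k (schur_compl A k)"
proof -
  have sym: "symmetric_mat (Suc k) A" using assms unfolding pos_def_def by auto
  have "quad_form (Suc k) A ((\<lambda>_. 0)(k:=1)) > 0"
    using assms unfolding pos_def_def by (metis fun_upd_same lessI zero_neq_one)
  also have "quad_form (Suc k) A ((\<lambda>_. 0)(k:=1)) = A k k"
    by (subst quad_form_upd[OF sym]) (simp add: quad_form_def)
  finally show a: "A k k > 0" .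
  show "pos_def k (schur_compl A k)"
    unfolding pos_def_def
  proof (intro conjI allI impI)
    show "symmetric_mat k (schur_compl A k)"
      using sym unfolding symmetric_mat_def schur_compl_def by (auto simp: mult.commute)
    fix x :: "nat \<Rightarrow> real" assume "\<exists>j<k. x j \<noteq> 0"
    define b where "b = (\<Sum>j<k. A k j * x j)"
    \<comment> \<open>the value of \<open>x k\<close> minimizing the form of \<open>A\<close> with \<open>x\<close> fixed below \<open>k\<close>\<close>
    define y where "y = - b / A k k"
    have "quad_form (Suc k) A (x(k:=y)) > 0"
      using assms \<open>\<exists>j<k. x j \<noteq> 0\<close> unfolding pos_def_def by (metis fun_upd_other less_SucI less_not_refl)
    also have "quad_form (Suc k) A (x(k:=y)) = quad_form k (schur_compl A k) x"
      unfolding quad_form_upd[OF sym] quad_form_schur_compl[OF sym] y_def b_def[symmetric]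
      using a by (simp add: field_simps power2_eq_square)
    finally show "quad_form k (schur_compl A k) x > 0" .
  qed
qed

definition to_mat :: "nat \<Rightarrow> (nat \<Rightarrow> nat \<Rightarrow> real) \<Rightarrow> real Matrix.mat" where
  "to_mat k A = Matrix.mat k k (\<lambda>(i,j). A i j)"

definition mdet :: "nat \<Rightarrow> (nat \<Rightarrow> nat \<Rightarrow> real) \<Rightarrow> real" where
  "mdet k A = Determinant.det (to_mat k A)"

lemma to_mat_carrier[simp]: "to_mat k A \<in> carrier_mat k k"
  unfolding to_mat_def by simp

lemma to_mat_index[simp]: "i < k \<Longrightarrow> j < k \<Longrightarrow> to_mat k A $$ (i,j) = A i j"
  unfolding to_mat_def by simp

lemma to_mat_dim[simp]: "dim_row (to_mat k A) = k" "dim_col (to_mat k A) = k"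
  unfolding to_mat_def by simp_all

lemma to_mat_mult: "to_mat k A * to_mat k C = to_mat k (\<lambda>i j. \<Sum>l<k. A i l * C l j)"
  by (rule eq_matI) (auto simp: scalar_prod_def atLeast0LessThan)

lemma mdet_0: "mdet 0 A = 1"
  unfolding mdet_def to_mat_def by (simp add: Determinant.det_def)

lemma mdet_upper_unitriangular:
  assumes "\<And>i j. j < i \<Longrightarrow> i < k \<Longrightarrow> L i j = 0" and "\<And>i. i < k \<Longrightarrow> L i i = 1"
  shows "mdet k L = 1"
proof -
  have "upper_triangular (to_mat k L)"
    unfolding upper_triangular_def using assms(1) by auto
  then have "mdet k L = prod_list (diag_mat (to_mat k L))"
    unfolding mdet_def by (rule det_upper_triangular[OF _ to_mat_carrier])
  also have "\<dots> = 1"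
    unfolding prod_list_diag_prod using assms(2) by (auto intro!: prod.neutral)
  finally show ?thesis .
qed

lemma mdet_Suc_last_column:
  assumes "\<And>i. i < k \<Longrightarrow> M i k = 0"
  shows "mdet (Suc k) M = M k k * mdet k M"
proof -
  have "mdet (Suc k) M = (\<Sum>i<Suc k. to_mat (Suc k) M $$ (i, k) * cofactor (to_mat (Suc k) M) i k)"
    unfolding mdet_def by (rule laplace_expansion_column) auto
  also have "\<dots> = M k k * cofactor (to_mat (Suc k) M) k k"
    using assms by (simp add: lessThan_Suc)
  also have "cofactor (to_mat (Suc k) M) k k = Determinant.det (mat_delete (to_mat (Suc k) M) k k)"
    unfolding cofactor_def by (simp add: mult_2[symmetric])
  also have "mat_delete (to_mat (Suc k) M) k k = to_mat k M"
    by (rule eq_matI) (auto simp: mat_delete_def)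
  finally show ?thesis unfolding mdet_def .
qed

lemma mdet_schur_compl:
  assumes a: "A k k \<noteq> 0"
  shows "mdet (Suc k) A = A k k * mdet k (schur_compl A k)"
proof -
  \<comment> \<open>\<open>A = L M\<close> with \<open>L\<close> unit upper triangular and \<open>M\<close> zero above the pivot in column \<open>k\<close>,
    its top left block being \<open>schur_compl A k\<close>\<close>
  define L where "L = (\<lambda>i j. (if i = j then 1 else 0) + (if j = k \<and> i \<noteq> k then A i k / A k k else 0 :: real))"
  define M where "M = (\<lambda>i j. if i = k then A k j else schur_compl A k i j)"
  have "to_mat (Suc k) A = to_mat (Suc k) L * to_mat (Suc k) M"
    unfolding to_mat_mult
  proof (rule eq_matI)
    fix i j assume "i < dim_row (to_mat (Suc k) (\<lambda>i j. \<Sum>l<Suc k. L i l * M l j))"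
      and "j < dim_col (to_mat (Suc k) (\<lambda>i j. \<Sum>l<Suc k. L i l * M l j))"
    then have i: "i < Suc k" and j: "j < Suc k" by auto
    have "(\<Sum>l<Suc k. L i l * M l j)
        = (\<Sum>l<Suc k. if i = l then M l j else 0) + (\<Sum>l<Suc k. if l = k \<and> i \<noteq> k then A i k / A k k * M l j else 0)"
      unfolding sum.distrib[symmetric] by (intro sum.cong refl) (simp add: L_def)
    also have "\<dots> = A i j"
      using i a unfolding M_def schur_compl_def by (auto simp: field_simps)
    finally show "to_mat (Suc k) A $$ (i, j) = to_mat (Suc k) (\<lambda>i j. \<Sum>l<Suc k. L i l * M l j) $$ (i, j)"
      using i j by simp
  qed simp_all
  then have "mdet (Suc k) A = mdet (Suc k) L * mdet (Suc k) M"
    unfolding mdet_def by (simp add: det_mult[OF to_mat_carrier to_mat_carrier])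
  also have "mdet (Suc k) L = 1"
    by (rule mdet_upper_unitriangular) (auto simp: L_def)
  also have "mdet (Suc k) M = A k k * mdet k (schur_compl A k)"
  proof -
    have "mdet k M = mdet k (schur_compl A k)"
      unfolding mdet_def by (rule arg_cong[of _ _ Determinant.det]) (auto simp: M_def intro!: eq_matI)
    moreover have "mdet (Suc k) M = M k k * mdet k M"
      using a by (intro mdet_Suc_last_column) (simp add: M_def schur_compl_def)
    ultimately show ?thesis by (simp add: M_def)
  qed
  finally show ?thesis by simp
qed

lemma mdet_pos_def_pos: "pos_def k A \<Longrightarrow> mdet k A > 0"
proof (induction k arbitrary: A)
  case 0
  then show ?case by (simp add: mdet_0)
next
  case (Suc k)
  have "A k k > 0" and "mdet k (schur_compl A k) > 0"
    using pos_def_schur_compl[OF Suc.prems] Suc.IH by auto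
  then show ?case by (simp add: mdet_schur_compl)
qed

section \<open>The Gaussian integral\<close>

definition gaussian :: "nat \<Rightarrow> (nat \<Rightarrow> nat \<Rightarrow> real) \<Rightarrow> (nat \<Rightarrow> real) \<Rightarrow> real" where
  "gaussian k A x = exp (- quad_form k A x)"

definition gaussian_integral :: "nat \<Rightarrow> (nat \<Rightarrow> nat \<Rightarrow> real) \<Rightarrow> ennreal" where
  "gaussian_integral k A = (\<integral>\<^sup>+x. ennreal (gaussian k A x) \<partial>RR k)"

definition gauss_const :: "nat \<Rightarrow> (nat \<Rightarrow> nat \<Rightarrow> real) \<Rightarrow> real" where
  "gauss_const k A = pi powr (real k / 2) / sqrt (mdet k A)"

lemma gauss_const_pos: "pos_def k A \<Longrightarrow> gauss_const k A > 0"
  unfolding gauss_const_def using mdet_pos_def_pos by simp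

lemma measurable_gaussian[measurable]: "gaussian k A \<in> borel_measurable (RR k)"
  unfolding gaussian_def quad_form_def RR_def by measurable

interpretation lborel_product: product_sigma_finite "\<lambda>_. lborel"
  by (simp add: product_sigma_finite_def lborel.sigma_finite_measure_axioms)

lemma nn_integral_gaussian_upd:
  assumes sym: "symmetric_mat (Suc k) A" and a: "A k k > 0"
  shows "(\<integral>\<^sup>+y. ennreal (gaussian (Suc k) A (x(k:=y))) \<partial>lborel)
       = ennreal (sqrt (pi / A k k)) * ennreal (gaussian k (schur_compl A k) x)"
proof -
  define b where "b = (\<Sum>j<k. A k j * x j)"
  have "(\<integral>\<^sup>+y. ennreal (gaussian (Suc k) A (x(k:=y))) \<partial>lborel)
      = (\<integral>\<^sup>+y. ennreal (exp (-(A k k * y\<^sup>2 + 2*b*y + quad_form k A x))) \<partial>lborel)"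
    unfolding gaussian_def quad_form_upd[OF sym] b_def by (simp add: algebra_simps)
  also have "\<dots> = ennreal (sqrt (pi / A k k) * exp (b\<^sup>2 / A k k - quad_form k A x))"
    by (rule nn_integral_exp_quadratic[OF a])
  also have "b\<^sup>2 / A k k - quad_form k A x = - quad_form k (schur_compl A k) x"
    unfolding quad_form_schur_compl[OF sym] b_def by simp
  also have "ennreal (sqrt (pi / A k k) * exp (- quad_form k (schur_compl A k) x))
      = ennreal (sqrt (pi / A k k)) * ennreal (gaussian k (schur_compl A k) x)"
    using a by (simp add: gaussian_def ennreal_mult)
  finally show ?thesis .
qed

lemma gaussian_integral_Suc:
  assumes "symmetric_mat (Suc k) A" and "A k k > 0"
  shows "gaussian_integral (Suc k) A = ennreal (sqrt (pi / A k k)) * gaussian_integral k (schur_compl A k)"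
proof -
  have "gaussian_integral (Suc k) A = (\<integral>\<^sup>+x. (\<integral>\<^sup>+y. ennreal (gaussian (Suc k) A (x(k:=y))) \<partial>lborel) \<partial>RR k)"
    unfolding gaussian_integral_def RR_def lessThan_Suc
    using measurable_gaussian[of "Suc k" A]
    by (subst lborel_product.product_nn_integral_insert) (auto simp: RR_def lessThan_Suc)
  also have "\<dots> = ennreal (sqrt (pi / A k k)) * gaussian_integral k (schur_compl A k)"
    unfolding nn_integral_gaussian_upd[OF assms] gaussian_integral_def
    by (rule nn_integral_cmult) measurable
  finally show ?thesis .
qed

lemma gauss_const_Suc:
  assumes "A k k > 0" and "mdet k (schur_compl A k) > 0"
  shows "sqrt (pi / A k k) * gauss_const k (schur_compl A k) = gauss_const (Suc k) A"
proof -
  have "pi powr (real (Suc k) / 2) = pi powr (real k / 2) * sqrt pi"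
    by (simp add: powr_add[symmetric] add_divide_distrib powr_half_sqrt[symmetric] add.commute)
  then show ?thesis
    unfolding gauss_const_def using assms by (simp add: mdet_schur_compl real_sqrt_divide real_sqrt_mult)
qed

lemma gaussian_integral_pos_def: "pos_def k A \<Longrightarrow> gaussian_integral k A = ennreal (gauss_const k A)"
proof (induction k arbitrary: A)
  case 0
  then show ?case
    by (simp add: gaussian_integral_def gauss_const_def mdet_0 RR_def PiM_empty gaussian_def quad_form_def)
next
  case (Suc k)
  have a: "A k k > 0" and S: "pos_def k (schur_compl A k)"
    using pos_def_schur_compl[OF Suc.prems] by auto
  have "symmetric_mat (Suc k) A" using Suc.prems unfolding pos_def_def by auto
  then have "gaussian_integral (Suc k) A = ennreal (sqrt (pi / A k k)) * ennreal (gauss_const k (schur_compl A k))"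
    using a by (simp add: gaussian_integral_Suc Suc.IH[OF S])
  also have "\<dots> = ennreal (gauss_const (Suc k) A)"
    unfolding gauss_const_Suc[OF a mdet_pos_def_pos[OF S], symmetric]
    using a gauss_const_pos[OF S] by (simp add: ennreal_mult)
  finally show ?case .
qed

lemma integral_gaussian: "pos_def k A \<Longrightarrow> integral\<^sup>L (RR k) (gaussian k A) = gauss_const k A"
  using gaussian_integral_pos_def[of k A] gauss_const_pos[of k A]
  unfolding gaussian_integral_def by (subst integral_eq_nn_integral) (auto simp: gaussian_def)

section \<open>Inverse matrices\<close>

definition mat_inverse :: "nat \<Rightarrow> (nat \<Rightarrow> nat \<Rightarrow> real) \<Rightarrow> (nat \<Rightarrow> nat \<Rightarrow> real) \<Rightarrow> bool" where
  "mat_inverse k A C \<longleftrightarrow>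
     (\<forall>i<k. \<forall>j<k. (\<Sum>l<k. A i l * C l j) = (if i = j then 1 else 0)) \<and>
     (\<forall>i<k. \<forall>j<k. (\<Sum>l<k. C i l * A l j) = (if i = j then 1 else 0))"

lemma mat_inverse_commute: "mat_inverse k A C \<Longrightarrow> mat_inverse k C A"
  unfolding mat_inverse_def by auto

lemma to_mat_eq_one_mat_iff: "to_mat k M = 1\<^sub>m k \<longleftrightarrow> (\<forall>i<k. \<forall>j<k. M i j = (if i = j then 1 else 0))"
proof
  assume "to_mat k M = 1\<^sub>m k"
  then show "\<forall>i<k. \<forall>j<k. M i j = (if i = j then 1 else 0)"
    by (metis index_one_mat(1) to_mat_index)
qed (auto intro!: eq_matI)

lemma mat_inverse_to_mat:
  "mat_inverse k A C \<longleftrightarrow> to_mat k A * to_mat k C = 1\<^sub>m k \<and> to_mat k C * to_mat k A = 1\<^sub>m k"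
  unfolding mat_inverse_def to_mat_mult to_mat_eq_one_mat_iff ..

lemma symmetric_mat_to_mat: "symmetric_mat k A \<longleftrightarrow> transpose_mat (to_mat k A) = to_mat k A"
proof
  assume At: "transpose_mat (to_mat k A) = to_mat k A"
  show "symmetric_mat k A"
    unfolding symmetric_mat_def
  proof (intro allI impI)
    fix j l assume "j < k" "l < k"
    then show "A j l = A l j" using arg_cong[OF At, of "\<lambda>M. M $$ (l, j)"] by simp
  qed
qed (auto simp: symmetric_mat_def intro!: eq_matI)

lemma mdet_mat_inverse: "mat_inverse k A C \<Longrightarrow> mdet k A * mdet k C = 1"
  unfolding mat_inverse_to_mat mdet_def
  by (metis det_mult[OF to_mat_carrier to_mat_carrier] det_one)

lemma symmetric_mat_inverse:
  assumes "symmetric_mat k A" and "mat_inverse k A C"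
  shows "symmetric_mat k C"
proof -
  let ?A = "to_mat k A" and ?C = "to_mat k C"
  have AC: "?A * ?C = 1\<^sub>m k"
    using assms(2) unfolding mat_inverse_to_mat by auto
  have "transpose_mat ?C * ?A = transpose_mat (?A * ?C)"
    using assms(1) unfolding symmetric_mat_to_mat by (simp add: transpose_mult[OF to_mat_carrier to_mat_carrier])
  then have CtA: "transpose_mat ?C * ?A = 1\<^sub>m k" unfolding AC by simp
  have "transpose_mat ?C = transpose_mat ?C * (?A * ?C)"
    unfolding AC by simp
  also have "\<dots> = (transpose_mat ?C * ?A) * ?C"
    by (simp add: assoc_mult_mat[of _ k k _ k _ k])
  finally show ?thesis unfolding symmetric_mat_to_mat CtA by simp
qed

lemma pos_def_inverse_exists:
  assumes "pos_def k A"
  shows "\<exists>C. mat_inverse k A C"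
proof -
  have "to_mat k A \<in> Units (ring_mat TYPE(real) k undefined)"
    using mdet_pos_def_pos[OF assms] by (intro det_non_zero_imp_unit) (simp_all add: mdet_def)
  then obtain B where B: "B \<in> carrier_mat k k" "B * to_mat k A = 1\<^sub>m k" "to_mat k A * B = 1\<^sub>m k"
    unfolding Units_def ring_mat_def by auto
  then have "B = to_mat k (\<lambda>i j. B $$ (i, j))"
    by (intro eq_matI) auto
  with B show ?thesis unfolding mat_inverse_to_mat by metis
qed

lemma mvec_mat_inverse:
  assumes "mat_inverse k A C" and "j < k"
  shows "mvec k A (mvec k C y) j = y j"
proof -
  have "mvec k A (mvec k C y) j = (\<Sum>l<k. \<Sum>q<k. A j l * C l q * y q)"
    unfolding mvec_def by (simp add: sum_distrib_left mult_ac)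
  also have "\<dots> = (\<Sum>q<k. (\<Sum>l<k. A j l * C l q) * y q)"
    by (subst sum.swap) (simp add: sum_distrib_right)
  also have "\<dots> = (\<Sum>q<k. if j = q then y q else 0)"
    using assms unfolding mat_inverse_def by (intro sum.cong refl) auto
  finally show ?thesis using assms(2) by simp
qed

lemma quad_form_mat_inverse:
  assumes "mat_inverse k A C"
  shows "quad_form k A (mvec k C y) = quad_form k C y"
proof -
  have "quad_form k A (mvec k C y) = dot k (mvec k C y) y"
    unfolding quad_form_dot dot_def using mvec_mat_inverse[OF assms] by simp
  then show ?thesis by (simp add: quad_form_dot dot_commute)
qed

lemma pos_def_mat_inverse:
  assumes A: "pos_def k A" and AC: "mat_inverse k A C"
  shows "pos_def k C"
  unfolding pos_def_def
proof (intro conjI allI impI)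
  show "symmetric_mat k C" using A AC symmetric_mat_inverse unfolding pos_def_def by blast
  fix y :: "nat \<Rightarrow> real" assume "\<exists>j<k. y j \<noteq> 0"
  then obtain j where "j < k" "y j \<noteq> 0" by blast
  have "\<exists>l<k. mvec k C y l \<noteq> 0"
  proof (rule ccontr)
    assume "\<not> ?thesis"
    then have "mvec k A (mvec k C y) j = 0" by (simp add: mvec_def[of k A])
    with mvec_mat_inverse[OF AC \<open>j < k\<close>] \<open>y j \<noteq> 0\<close> show False by simp
  qed
  then have "quad_form k A (mvec k C y) > 0" using A unfolding pos_def_def by auto
  then show "quad_form k C y > 0" unfolding quad_form_mat_inverse[OF AC] .
qed

lemma quad_form_young:
  assumes A: "pos_def k A" and AC: "mat_inverse k A C"
  shows "2 * dot k y w - quad_form k C w \<le> quad_form k A y"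
proof -
  have "0 \<le> quad_form k A (\<lambda>j. y j - mvec k C w j)"
    by (rule quad_form_nonneg[OF A])
  also have "\<dots> = quad_form k A y - 2 * dot k y (mvec k A (mvec k C w)) + quad_form k A (mvec k C w)"
    using A unfolding pos_def_def by (simp add: quad_form_diff)
  also have "dot k y (mvec k A (mvec k C w)) = dot k y w"
    unfolding dot_def using mvec_mat_inverse[OF AC] by (intro sum.cong) simp_all
  also have "quad_form k A (mvec k C w) = quad_form k C w"
    by (rule quad_form_mat_inverse[OF AC])
  finally show ?thesis by simp
qed

section \<open>The form \<open>\<Sum>\<^sub>i c\<^sub>i B\<^sub>i\<^sup>* C\<^sub>i B\<^sub>i\<close>\<close>

definition pullback_form :: "nat \<Rightarrow> (nat \<Rightarrow> nat \<Rightarrow> real) \<Rightarrow> (nat \<Rightarrow> nat \<Rightarrow> real) \<Rightarrow> nat \<Rightarrow> nat \<Rightarrow> real" where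
  "pullback_form p B C = (\<lambda>l l'. \<Sum>j<p. \<Sum>q<p. B j l * C j q * B q l')"

definition bl_form :: "nat \<Rightarrow> (nat \<Rightarrow> nat) \<Rightarrow> (nat \<Rightarrow> real) \<Rightarrow> (nat \<Rightarrow> nat \<Rightarrow> nat \<Rightarrow> real)
    \<Rightarrow> (nat \<Rightarrow> nat \<Rightarrow> nat \<Rightarrow> real) \<Rightarrow> nat \<Rightarrow> nat \<Rightarrow> real" where
  "bl_form m ni c B C = (\<lambda>l l'. \<Sum>i<m. c i * pullback_form (ni i) (B i) (C i) l l')"

lemma mvec_pullback_form: "mvec n (pullback_form p B C) x = mvec p (transp B) (mvec p C (mvec n B x))"
proof
  fix l
  have "mvec n (pullback_form p B C) x l = (\<Sum>l'<n. \<Sum>j<p. \<Sum>q<p. B j l * C j q * B q l' * x l')"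
    unfolding mvec_def pullback_form_def by (simp add: sum_distrib_right)
  also have "\<dots> = (\<Sum>j<p. \<Sum>q<p. \<Sum>l'<n. B j l * C j q * B q l' * x l')"
    by (subst sum.swap) (intro sum.cong refl sum.swap)
  also have "\<dots> = mvec p (transp B) (mvec p C (mvec n B x)) l"
    unfolding mvec_def transp_def by (simp add: sum_distrib_left mult_ac)
  finally show "mvec n (pullback_form p B C) x l = mvec p (transp B) (mvec p C (mvec n B x)) l" .
qed

lemma quad_form_pullback_form: "quad_form n (pullback_form p B C) x = quad_form p C (mvec n B x)"
  unfolding quad_form_dot mvec_pullback_form dot_commute[of n x] dot_mvec_transp[symmetric]
  by (rule dot_commute)

lemma symmetric_pullback_form:
  assumes "symmetric_mat p C"
  shows "symmetric_mat n (pullback_form p B C)"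
  unfolding symmetric_mat_def pullback_form_def
proof (intro allI impI)
  fix l l'
  have "(\<Sum>j<p. \<Sum>q<p. B j l * C j q * B q l') = (\<Sum>q<p. \<Sum>j<p. B j l * C j q * B q l')"
    by (rule sum.swap)
  also have "\<dots> = (\<Sum>q<p. \<Sum>j<p. B q l' * C q j * B j l)"
    using assms unfolding symmetric_mat_def by (intro sum.cong refl) (simp add: mult_ac)
  finally show "(\<Sum>j<p. \<Sum>q<p. B j l * C j q * B q l') = (\<Sum>j<p. \<Sum>q<p. B j l' * C j q * B q l)" .
qed

lemma mvec_bl_form:
  "mvec n (bl_form m ni c B C) x
     = (\<lambda>l. \<Sum>i<m. c i * mvec (ni i) (transp (B i)) (mvec (ni i) (C i) (mvec n (B i) x)) l)"
  unfolding bl_form_def mvec_sum mvec_pullback_form ..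

lemma quad_form_bl_form:
  "quad_form n (bl_form m ni c B C) x = (\<Sum>i<m. c i * quad_form (ni i) (C i) (mvec n (B i) x))"
  unfolding bl_form_def quad_form_sum quad_form_pullback_form ..

lemma pos_def_bl_form:
  assumes C: "\<forall>i<m. pos_def (ni i) (C i)" and c: "\<forall>i<m. c i > 0"
    and ker: "\<forall>x\<in>space (RR n). (\<forall>i<m. \<forall>j<ni i. matvec (ni i) n (B i) x j = 0) \<longrightarrow> (\<forall>l<n. x l = 0)"
  shows "pos_def n (bl_form m ni c B C)"
  unfolding pos_def_def
proof (intro conjI allI impI)
  show "symmetric_mat n (bl_form m ni c B C)"
    unfolding bl_form_def using C by (intro symmetric_mat_sum symmetric_pullback_form) (auto simp: pos_def_def)
  fix x :: "nat \<Rightarrow> real" assume "\<exists>l<n. x l \<noteq> 0"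
  then obtain l where l: "l < n" "x l \<noteq> 0" by auto
  let ?t = "\<lambda>i. c i * quad_form (ni i) (C i) (mvec n (B i) x)"
  have t_nonneg: "0 \<le> ?t i" if "i \<in> {..<m}" for i
    using that C c quad_form_nonneg by (simp add: less_imp_le)
  show "quad_form n (bl_form m ni c B C) x > 0"
  proof (rule ccontr)
    assume "\<not> ?thesis"
    moreover have "0 \<le> sum ?t {..<m}"
      by (rule sum_nonneg) (rule t_nonneg)
    ultimately have "sum ?t {..<m} = 0"
      unfolding quad_form_bl_form by linarith
    then have t_zero: "?t i = 0" if "i < m" for i
      using sum_nonneg_eq_0_iff[of "{..<m}" ?t] t_nonneg that by simp
    have "mvec n (B i) x j = 0" if "i < m" "j < ni i" for i j
    proof -
      have "quad_form (ni i) (C i) (mvec n (B i) x) = 0"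
        using t_zero[OF that(1)] c that(1) by fastforce
      then show ?thesis
        using quad_form_eq_0[of "ni i" "C i" "mvec n (B i) x" j] C that by blast
    qed
    then have "\<forall>i<m. \<forall>j<ni i. matvec (ni i) n (B i) (restrict x {..<n}) j = 0"
      by (simp add: matvec_eq_mvec mvec_cong[of n "restrict x {..<n}" x])
    moreover have "restrict x {..<n} \<in> space (RR n)"
      by (simp add: RR_def space_PiM)
    ultimately have "restrict x {..<n} l = 0"
      using ker l(1) by blast
    with l show False by simp
  qed
qed

section \<open>\<open>I\<close> and \<open>J\<close> of Gaussian tuples\<close>

definition decompositions :: "nat \<Rightarrow> nat \<Rightarrow> (nat \<Rightarrow> nat) \<Rightarrow> (nat \<Rightarrow> real) \<Rightarrow> (nat \<Rightarrow> nat \<Rightarrow> nat \<Rightarrow> real)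
    \<Rightarrow> (nat \<Rightarrow> real) \<Rightarrow> (nat \<Rightarrow> nat \<Rightarrow> real) set" where
  "decompositions m n ni c B x = {y. (\<forall>i<m. y i \<in> space (RR (ni i))) \<and>
     (\<forall>l<n. (\<Sum>i<m. c i * matvec n (ni i) (transp (B i)) (y i) l) = x l)}"

lemma I_fun_decompositions:
  "I_fun m n ni c B f = outer_nn_integral (RR n)
     (\<lambda>x. SUP y \<in> decompositions m n ni c B x. ennreal (\<Prod>i<m. f i (y i) powr c i))"
  unfolding I_fun_def decompositions_def ..

lemma quad_form_decomposition_lower_bound:
  assumes A: "\<forall>i<m. pos_def (ni i) (A i)" and AC: "\<forall>i<m. mat_inverse (ni i) (A i) (C i)"
    and c: "\<forall>i<m. c i > 0" and N': "mat_inverse n (bl_form m ni c B C) N'"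
    and y: "y \<in> decompositions m n ni c B x"
  shows "quad_form n N' x \<le> (\<Sum>i<m. c i * quad_form (ni i) (A i) (y i))"
proof -
  define z where "z = mvec n N' x"
  have "(\<Sum>i<m. c i * dot (ni i) (y i) (mvec n (B i) z)) = dot n (\<lambda>l. \<Sum>i<m. c i * mvec (ni i) (transp (B i)) (y i) l) z"
    unfolding dot_mvec_transp by (simp add: dot_def sum_distrib_left sum_distrib_right mult_ac sum.swap[of _ "{..<n}"])
  also have "\<dots> = dot n x z"
    using y unfolding decompositions_def dot_def by (auto simp: matvec_eq_mvec intro!: sum.cong)
  also have "\<dots> = quad_form n N' x"
    unfolding z_def quad_form_dot ..
  finally have linear: "(\<Sum>i<m. c i * dot (ni i) (y i) (mvec n (B i) z)) = quad_form n N' x" .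
  have quadratic: "(\<Sum>i<m. c i * quad_form (ni i) (C i) (mvec n (B i) z)) = quad_form n N' x"
    unfolding quad_form_bl_form[symmetric] z_def quad_form_mat_inverse[OF N'] ..
  have "(\<Sum>i<m. c i * (2 * dot (ni i) (y i) (mvec n (B i) z) - quad_form (ni i) (C i) (mvec n (B i) z)))
      \<le> (\<Sum>i<m. c i * quad_form (ni i) (A i) (y i))"
    using A AC c by (intro sum_mono mult_left_mono quad_form_young) (auto simp: less_imp_le)
  moreover have "(\<Sum>i<m. c i * (2 * dot (ni i) (y i) (mvec n (B i) z) - quad_form (ni i) (C i) (mvec n (B i) z)))
      = quad_form n N' x"
  proof -
    have "(\<Sum>i<m. c i * (2 * a i - b i)) = 2 * (\<Sum>i<m. c i * a i) - (\<Sum>i<m. c i * b i)"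
      for a b :: "nat \<Rightarrow> real"
      by (simp add: sum_subtractf sum_distrib_left algebra_simps)
    then show ?thesis using linear quadratic by simp
  qed
  ultimately show ?thesis by simp
qed

lemma quad_form_decomposition_attained:
  assumes AC: "\<forall>i<m. mat_inverse (ni i) (A i) (C i)" and N': "mat_inverse n (bl_form m ni c B C) N'"
  shows "\<exists>y\<in>decompositions m n ni c B x. (\<Sum>i<m. c i * quad_form (ni i) (A i) (y i)) = quad_form n N' x"
proof
  define z where "z = mvec n N' x"
  define y where "y = (\<lambda>i. restrict (mvec (ni i) (C i) (mvec n (B i) z)) {..<ni i})"
  have y_mvec: "mvec (ni i) M (y i) = mvec (ni i) M (mvec (ni i) (C i) (mvec n (B i) z))" for i M
    unfolding y_def by (rule mvec_cong) simp
  have "(\<Sum>i<m. c i * quad_form (ni i) (A i) (y i)) = (\<Sum>i<m. c i * quad_form (ni i) (C i) (mvec n (B i) z))"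
    using AC unfolding y_def
    by (intro sum.cong refl) (simp add: quad_form_cong[of _ "restrict _ _" "mvec _ _ _"] quad_form_mat_inverse)
  also have "\<dots> = quad_form n N' x"
    unfolding quad_form_bl_form[symmetric] z_def quad_form_mat_inverse[OF N'] ..
  finally show "(\<Sum>i<m. c i * quad_form (ni i) (A i) (y i)) = quad_form n N' x" .
  have "(\<Sum>i<m. c i * matvec n (ni i) (transp (B i)) (y i) l) = x l" if "l < n" for l
  proof -
    have "(\<Sum>i<m. c i * matvec n (ni i) (transp (B i)) (y i) l) = mvec n (bl_form m ni c B C) z l"
      using that by (simp add: matvec_eq_mvec y_mvec mvec_bl_form)
    then show ?thesis
      unfolding z_def mvec_mat_inverse[OF N' that] .
  qed
  then show "y \<in> decompositions m n ni c B x"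
    unfolding decompositions_def y_def by (auto simp: RR_def space_PiM)
qed

lemma prod_gaussian_powr:
  fixes m :: nat
  shows "(\<Prod>i<m. gaussian (ni i) (A i) (y i) powr c i) = exp (- (\<Sum>i<m. c i * quad_form (ni i) (A i) (y i)))"
  by (simp add: gaussian_def powr_def sum_negf[symmetric] exp_sum)

lemma SUP_gaussian_decompositions:
  assumes A: "\<forall>i<m. pos_def (ni i) (A i)" and AC: "\<forall>i<m. mat_inverse (ni i) (A i) (C i)"
    and c: "\<forall>i<m. c i > 0" and N': "mat_inverse n (bl_form m ni c B C) N'"
  shows "(SUP y \<in> decompositions m n ni c B x. ennreal (\<Prod>i<m. gaussian (ni i) (A i) (y i) powr c i))
       = ennreal (gaussian n N' x)"
proof (rule antisym)
  show "(SUP y \<in> decompositions m n ni c B x. ennreal (\<Prod>i<m. gaussian (ni i) (A i) (y i) powr c i))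
      \<le> ennreal (gaussian n N' x)"
    using quad_form_decomposition_lower_bound[OF A AC c N']
    unfolding prod_gaussian_powr by (intro SUP_least ennreal_leI) (simp add: gaussian_def)
  obtain y where "y \<in> decompositions m n ni c B x"
    and "(\<Sum>i<m. c i * quad_form (ni i) (A i) (y i)) = quad_form n N' x"
    using quad_form_decomposition_attained[OF AC N'] by blast
  then show "ennreal (gaussian n N' x)
      \<le> (SUP y \<in> decompositions m n ni c B x. ennreal (\<Prod>i<m. gaussian (ni i) (A i) (y i) powr c i))"
    unfolding prod_gaussian_powr by (intro SUP_upper2) (auto simp: gaussian_def)
qed

lemma outer_nn_integral_measurable:
  assumes "h \<in> borel_measurable M"
  shows "outer_nn_integral M h = integral\<^sup>N M h"
  unfolding outer_nn_integral_def
  by (rule antisym) (use assms in \<open>auto intro!: INF_lower INF_greatest nn_integral_mono\<close>)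

lemma I_fun_gaussians:
  assumes "\<forall>i<m. pos_def (ni i) (A i)" and "\<forall>i<m. mat_inverse (ni i) (A i) (C i)"
    and "\<forall>i<m. c i > 0" and "mat_inverse n (bl_form m ni c B C) N'"
  shows "I_fun m n ni c B (\<lambda>i. gaussian (ni i) (A i)) = gaussian_integral n N'"
  unfolding I_fun_decompositions SUP_gaussian_decompositions[OF assms] gaussian_integral_def
  by (rule outer_nn_integral_measurable) measurable

lemma J_fun_gaussians:
  "J_fun m n ni c B (\<lambda>i. gaussian (ni i) (C i)) = gaussian_integral n (bl_form m ni c B C)"
proof -
  have "quad_form (ni i) (C i) (matvec (ni i) n (B i) x) = quad_form (ni i) (C i) (mvec n (B i) x)" for i x
    by (rule quad_form_cong) (simp add: matvec_eq_mvec)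
  then show ?thesis
    unfolding J_fun_def gaussian_integral_def prod_gaussian_powr
    by (simp add: gaussian_def quad_form_bl_form)
qed

lemma denom_gaussians:
  "\<forall>i<m. pos_def (ni i) (A i) \<Longrightarrow>
    denom m ni c (\<lambda>i. gaussian (ni i) (A i)) = (\<Prod>i<m. gauss_const (ni i) (A i) powr c i)"
  unfolding denom_def by (intro prod.cong refl) (simp add: integral_gaussian)

lemma gauss_const_mat_inverse:
  assumes "mat_inverse k A C"
  shows "gauss_const k A * gauss_const k C = pi powr real k"
proof -
  have "sqrt (mdet k A) * sqrt (mdet k C) = 1"
    using mdet_mat_inverse[OF assms] by (simp add: real_sqrt_mult[symmetric])
  moreover have "pi powr (real k / 2) * pi powr (real k / 2) = pi powr real k"
    by (simp add: powr_add[symmetric])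
  ultimately show ?thesis unfolding gauss_const_def by (simp add: field_simps)
qed

section \<open>Duality between the Gaussian ratios\<close>

definition I_ratio :: "nat \<Rightarrow> nat \<Rightarrow> (nat \<Rightarrow> nat) \<Rightarrow> (nat \<Rightarrow> real) \<Rightarrow> (nat \<Rightarrow> nat \<Rightarrow> nat \<Rightarrow> real)
    \<Rightarrow> (nat \<Rightarrow> (nat \<Rightarrow> real) \<Rightarrow> real) \<Rightarrow> ennreal" where
  "I_ratio m n ni c B g = I_fun m n ni c B g / ennreal (denom m ni c g)"

definition J_ratio :: "nat \<Rightarrow> nat \<Rightarrow> (nat \<Rightarrow> nat) \<Rightarrow> (nat \<Rightarrow> real) \<Rightarrow> (nat \<Rightarrow> nat \<Rightarrow> nat \<Rightarrow> real)
    \<Rightarrow> (nat \<Rightarrow> (nat \<Rightarrow> real) \<Rightarrow> real) \<Rightarrow> ennreal" where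
  "J_ratio m n ni c B g = J_fun m n ni c B g / ennreal (denom m ni c g)"

lemma denom_gaussians_mat_inverse:
  assumes scaling: "(\<Sum>i<m. c i * real (ni i)) = real n"
    and A: "\<forall>i<m. pos_def (ni i) (A i)" and AC: "\<forall>i<m. mat_inverse (ni i) (A i) (C i)"
  shows "denom m ni c (\<lambda>i. gaussian (ni i) (A i)) * denom m ni c (\<lambda>i. gaussian (ni i) (C i)) = pi powr real n"
proof -
  have C: "\<forall>i<m. pos_def (ni i) (C i)" using A AC pos_def_mat_inverse by blast
  have "denom m ni c (\<lambda>i. gaussian (ni i) (A i)) * denom m ni c (\<lambda>i. gaussian (ni i) (C i))
      = (\<Prod>i<m. (gauss_const (ni i) (A i) * gauss_const (ni i) (C i)) powr c i)"
    unfolding denom_gaussians[OF A] denom_gaussians[OF C] prod.distrib[symmetric]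
    using A C gauss_const_pos by (intro prod.cong refl) (simp add: powr_mult less_imp_le)
  also have "\<dots> = (\<Prod>i<m. pi powr (c i * real (ni i)))"
    using AC by (intro prod.cong refl) (simp add: gauss_const_mat_inverse powr_powr mult.commute)
  also have "\<dots> = pi powr real n"
    unfolding scaling[symmetric] by (simp add: powr_sum)
  finally show ?thesis .
qed

lemma gaussian_ratios_reciprocal:
  assumes c: "\<forall>i<m. c i > 0" and scaling: "(\<Sum>i<m. c i * real (ni i)) = real n"
    and ker: "\<forall>x\<in>space (RR n). (\<forall>i<m. \<forall>j<ni i. matvec (ni i) n (B i) x j = 0) \<longrightarrow> (\<forall>l<n. x l = 0)"
    and A: "\<forall>i<m. pos_def (ni i) (A i)" and AC: "\<forall>i<m. mat_inverse (ni i) (A i) (C i)"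
  shows "\<exists>r>0. I_ratio m n ni c B (\<lambda>i. gaussian (ni i) (A i)) = ennreal r
             \<and> J_ratio m n ni c B (\<lambda>i. gaussian (ni i) (C i)) = ennreal (1 / r)"
proof -
  have C: "\<forall>i<m. pos_def (ni i) (C i)" using A AC pos_def_mat_inverse by blast
  define N where "N = bl_form m ni c B C"
  have N: "pos_def n N" unfolding N_def using C c ker by (rule pos_def_bl_form)
  obtain N' where NN': "mat_inverse n N N'" using pos_def_inverse_exists[OF N] by blast
  have N': "pos_def n N'" using N NN' by (rule pos_def_mat_inverse)
  define dA where "dA = denom m ni c (\<lambda>i. gaussian (ni i) (A i))"
  define dC where "dC = denom m ni c (\<lambda>i. gaussian (ni i) (C i))"
  have dA: "dA > 0" and dC: "dC > 0"
    unfolding dA_def dC_def denom_gaussians[OF A] denom_gaussians[OF C]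
    using A C by (auto intro!: prod_pos dest!: gauss_const_pos)
  define r where "r = gauss_const n N' / dA"
  have "I_ratio m n ni c B (\<lambda>i. gaussian (ni i) (A i)) = ennreal r"
    unfolding I_ratio_def I_fun_gaussians[OF A AC c NN'[unfolded N_def]] gaussian_integral_pos_def[OF N']
      dA_def[symmetric] r_def
    using gauss_const_pos[OF N'] dA by (simp add: divide_ennreal)
  moreover have "J_ratio m n ni c B (\<lambda>i. gaussian (ni i) (C i)) = ennreal (1 / r)"
  proof -
    have "gauss_const n N' * gauss_const n N = dA * dC"
      unfolding gauss_const_mat_inverse[OF mat_inverse_commute[OF NN']] dA_def dC_def
      by (rule denom_gaussians_mat_inverse[OF scaling A AC, symmetric])
    then have "gauss_const n N / dC = 1 / r"
      unfolding r_def using dA dC gauss_const_pos[OF N'] by (simp add: field_simps)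
    then show ?thesis
      unfolding J_ratio_def J_fun_gaussians N_def[symmetric] gaussian_integral_pos_def[OF N] dC_def[symmetric]
      using gauss_const_pos[OF N] dC by (simp add: divide_ennreal)
  qed
  moreover have "r > 0" unfolding r_def using gauss_const_pos[OF N'] dA by simp
  ultimately show ?thesis by blast
qed

lemma centered_gaussian_iff:
  "centered_gaussian k f \<longleftrightarrow> (\<exists>A. pos_def k A \<and> (\<forall>x\<in>space (RR k). f x = gaussian k A x))"
proof
  assume "centered_gaussian k f"
  then obtain A where sym: "symmetric_mat k A"
    and pos: "\<forall>x\<in>space (RR k). (\<exists>j<k. x j \<noteq> 0) \<longrightarrow> quad_form k A x > 0"
    and f: "\<forall>x\<in>space (RR k). f x = gaussian k A x"
    unfolding centered_gaussian_def symmetric_mat_def[symmetric] quad_form_def[symmetric] gaussian_def[symmetric]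
    by blast
  have "pos_def k A"
    unfolding pos_def_def
  proof (intro conjI allI impI)
    fix x :: "nat \<Rightarrow> real" assume "\<exists>j<k. x j \<noteq> 0"
    moreover have "restrict x {..<k} \<in> space (RR k)"
      by (simp add: RR_def space_PiM)
    ultimately have "quad_form k A (restrict x {..<k}) > 0"
      using pos by auto
    then show "quad_form k A x > 0"
      by (simp add: quad_form_cong[of k "restrict x {..<k}" x])
  qed (rule sym)
  with f show "\<exists>A. pos_def k A \<and> (\<forall>x\<in>space (RR k). f x = gaussian k A x)" by blast
next
  assume "\<exists>A. pos_def k A \<and> (\<forall>x\<in>space (RR k). f x = gaussian k A x)"
  then show "centered_gaussian k f"
    unfolding centered_gaussian_def pos_def_def symmetric_mat_def gaussian_def quad_form_def by blast
qed

lemma gaussians_in_gauss_tuples: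
  "\<forall>i<m. pos_def (ni i) (A i) \<Longrightarrow> (\<lambda>i. gaussian (ni i) (A i)) \<in> gauss_tuples m ni"
  unfolding gauss_tuples_def centered_gaussian_iff by blast

lemma denom_cong:
  assumes "\<And>i x. i < m \<Longrightarrow> x \<in> space (RR (ni i)) \<Longrightarrow> g i x = h i x"
  shows "denom m ni c g = denom m ni c h"
  unfolding denom_def using assms by (intro prod.cong refl arg_cong2[where f = "(powr)"] Bochner_Integration.integral_cong) auto

lemma I_ratio_cong:
  assumes "\<And>i x. i < m \<Longrightarrow> x \<in> space (RR (ni i)) \<Longrightarrow> g i x = h i x"
  shows "I_ratio m n ni c B g = I_ratio m n ni c B h"
proof -
  have "I_fun m n ni c B g = I_fun m n ni c B h"
    unfolding I_fun_decompositions using assms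
    by (intro arg_cong[where f = "outer_nn_integral (RR n)"] ext SUP_cong refl arg_cong[where f = ennreal] prod.cong)
      (auto simp: decompositions_def)
  then show ?thesis unfolding I_ratio_def using denom_cong[OF assms, where c = c] by simp
qed

lemma J_ratio_cong:
  assumes "\<And>i x. i < m \<Longrightarrow> x \<in> space (RR (ni i)) \<Longrightarrow> g i x = h i x"
  shows "J_ratio m n ni c B g = J_ratio m n ni c B h"
proof -
  have "matvec p q M x \<in> space (RR p)" for p q M x
    by (simp add: matvec_def RR_def space_PiM)
  then have "J_fun m n ni c B g = J_fun m n ni c B h"
    unfolding J_fun_def using assms by (intro nn_integral_cong arg_cong[where f = ennreal] prod.cong refl) auto
  then show ?thesis unfolding J_ratio_def using denom_cong[OF assms, where c = c] by simp
qed

lemma gauss_tuples_dual: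
  assumes c: "\<forall>i<m. c i > 0" and scaling: "(\<Sum>i<m. c i * real (ni i)) = real n"
    and ker: "\<forall>x\<in>space (RR n). (\<forall>i<m. \<forall>j<ni i. matvec (ni i) n (B i) x j = 0) \<longrightarrow> (\<forall>l<n. x l = 0)"
    and g: "g \<in> gauss_tuples m ni"
  shows "\<exists>h\<in>gauss_tuples m ni. \<exists>r>0. I_ratio m n ni c B g = ennreal r \<and> J_ratio m n ni c B h = ennreal (1 / r)"
    and "\<exists>h\<in>gauss_tuples m ni. \<exists>r>0. I_ratio m n ni c B h = ennreal r \<and> J_ratio m n ni c B g = ennreal (1 / r)"
proof -
  have "\<forall>i<m. \<exists>A. pos_def (ni i) A \<and> (\<forall>x\<in>space (RR (ni i)). g i x = gaussian (ni i) A x)"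
    using g unfolding gauss_tuples_def centered_gaussian_iff by blast
  then obtain A where A: "\<forall>i<m. pos_def (ni i) (A i)"
    and "\<forall>i<m. \<forall>x\<in>space (RR (ni i)). g i x = gaussian (ni i) (A i) x"
    by metis
  then have gA: "g i x = gaussian (ni i) (A i) x" if "i < m" "x \<in> space (RR (ni i))" for i x
    using that by blast
  have "\<forall>i<m. \<exists>C. mat_inverse (ni i) (A i) C"
    using A pos_def_inverse_exists by blast
  then obtain C where AC: "\<forall>i<m. mat_inverse (ni i) (A i) (C i)"
    by metis
  then have CA: "\<forall>i<m. mat_inverse (ni i) (C i) (A i)"
    using mat_inverse_commute by blast
  have C: "\<forall>i<m. pos_def (ni i) (C i)"
    using A AC pos_def_mat_inverse by blast
  have "I_ratio m n ni c B g = I_ratio m n ni c B (\<lambda>i. gaussian (ni i) (A i))"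
    using gA by (rule I_ratio_cong)
  then show "\<exists>h\<in>gauss_tuples m ni. \<exists>r>0. I_ratio m n ni c B g = ennreal r \<and> J_ratio m n ni c B h = ennreal (1 / r)"
    using gaussian_ratios_reciprocal[OF c scaling ker A AC] gaussians_in_gauss_tuples[OF C] by auto
  have "J_ratio m n ni c B g = J_ratio m n ni c B (\<lambda>i. gaussian (ni i) (A i))"
    using gA by (rule J_ratio_cong)
  then show "\<exists>h\<in>gauss_tuples m ni. \<exists>r>0. I_ratio m n ni c B h = ennreal r \<and> J_ratio m n ni c B g = ennreal (1 / r)"
    using gaussian_ratios_reciprocal[OF c scaling ker C CA] gaussians_in_gauss_tuples[OF C] by auto
qed

theorem lemma2:
  fixes m n :: nat and ni :: "nat \<Rightarrow> nat" and c :: "nat \<Rightarrow> real"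
    and B :: "nat \<Rightarrow> nat \<Rightarrow> nat \<Rightarrow> real"
  assumes "m \<ge> n"
    and "\<forall>i<m. c i > 0"
    and "\<forall>i<m. 0 < ni i \<and> ni i \<le> n"
    and "(\<Sum>i<m. c i * real (ni i)) = real n"
    and "\<forall>i<m. \<forall>z\<in>space (RR (ni i)). \<exists>x\<in>space (RR n). matvec (ni i) n (B i) x = z"
    and "\<forall>x\<in>space (RR n). (\<forall>i<m. \<forall>j<ni i. matvec (ni i) n (B i) x j = 0) \<longrightarrow> (\<forall>l<n. x l = 0)"
  shows "(F_g m n ni c B < \<infinity> \<longrightarrow> E_g m n ni c B * F_g m n ni c B = 1)
       \<and> (E_g m n ni c B = 0 \<longleftrightarrow> F_g m n ni c B = \<infinity>)"
proof -
  note dual = gauss_tuples_dual[OF assms(2,4,6)]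
  have E_g: "E_g m n ni c B = inverse (F_g m n ni c B)"
    unfolding E_g_def F_g_def I_ratio_def[symmetric] J_ratio_def[symmetric]
    by (rule INF_eq_inverse_SUP_ennreal) (fact dual)+
  let ?g = "\<lambda>i. gaussian (ni i) (\<lambda>j l. if j = l then 1 else 0)"
  have "?g \<in> gauss_tuples m ni"
    by (rule gaussians_in_gauss_tuples) (simp add: pos_def_one)
  then obtain r where "r > 0" "J_ratio m n ni c B ?g = ennreal (1 / r)"
    using dual(2) by blast
  then have "0 < J_ratio m n ni c B ?g" by simp
  also have "J_ratio m n ni c B ?g \<le> F_g m n ni c B"
    unfolding F_g_def J_ratio_def[symmetric] by (rule SUP_upper) fact
  finally have F_pos: "0 < F_g m n ni c B" .
  have "inverse (F_g m n ni c B) * F_g m n ni c B = 1" if "F_g m n ni c B < \<infinity>"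
    using F_pos that ennreal_divide_self[of "F_g m n ni c B"]
    by (simp add: divide_ennreal_def mult.commute)
  then show ?thesis unfolding E_g by simp
qed

end
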